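(* There is an element-based generator $\mathds{G}$ such that for every countable collection of languages $\mathcal{L}=\{L_1,L_2,\dots\}$, every target language $K\in\mathcal{L}$, and every enumeration of $K$ with $o(1)$-noise and arbitrary omissions, $\mathds{G}$ generates in the limit from $K$; that is, there is a finite $n^\star$ such that $w_n\in K$ for all $n\ge n^\star$, where $w_n$ is the output of $\mathds{G}$ at step $n$.
   Context: The universe is $U=\mathbb{N}$ (a countable set of strings, identified with $\mathbb{N}$). A language is an infinite subset of $U$; a collection is a countable family $\mathcal{L}=\{L_1,L_2,\dots\}$ of languages. An enumeration is a sequence $x_1,x_2,\dots$ of distinct elements of $U$; write $S_n=\{x_1,\dots,x_n\}$. The empirical noise rate of a language $L$ is $R(L;x_{1:n})=\frac1n|\{t\le n: x_t\notin L\}|$. An enumeration of a language $L$ with $o(1)$-noise is a sequence in which every element of $L$ appears exactly once and $R(L;x_{1:n})\to 0$. An enumeration of $K$ with $o(1)$-noise and arbitrary omissions is an enumeration with $o(1)$-noise of some $\hat K\subseteq K$ with $|\hat K|=\infty$. An element-based generator is a sequence of maps $\mathds{G}_n$ that, given $x_1,\dots,x_n$, outputs $w_n\in U\setminus(S_n\cup\{w_1,\dots,w_{n-1}\})$; it may use the collection $\mathcal{L}$ but not the target $K$. *)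

theory Defs
  imports Complex_Main
begin

text \<open>Universe U = nat. A sequence x_1, x_2, ... is a function x :: nat => nat with
  x 0 = x_1; the prefix x_1..x_n is map x [0..<n]. A collection L_1, L_2, ...
  is a function Ls :: nat => nat set.\<close>

definition noise_rate :: "nat set \<Rightarrow> (nat \<Rightarrow> nat) \<Rightarrow> nat \<Rightarrow> real" where
  "noise_rate L x n = real (card {t. t < n \<and> x t \<notin> L}) / real n"

definition noisy_enum :: "nat set \<Rightarrow> (nat \<Rightarrow> nat) \<Rightarrow> bool" where
  "noisy_enum L x \<longleftrightarrow> inj x \<and> L \<subseteq> range x \<and> (noise_rate L x \<longlonglongrightarrow> 0)"

definition noisy_enum_omissions :: "nat set \<Rightarrow> (nat \<Rightarrow> nat) \<Rightarrow> bool" where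
  "noisy_enum_omissions K x \<longleftrightarrow> (\<exists>Kh. Kh \<subseteq> K \<and> infinite Kh \<and> noisy_enum Kh x)"

text \<open>Element-based generator: G Ls [x_1,...,x_n] = w_n. It may depend on the collection
  Ls but not on the target. Its output must avoid S_n and the previous outputs.\<close>
definition element_generator :: "((nat \<Rightarrow> nat set) \<Rightarrow> nat list \<Rightarrow> nat) \<Rightarrow> bool" where
  "element_generator G \<longleftrightarrow>
     (\<forall>Ls x n. inj x \<longrightarrow> 1 \<le> n \<longrightarrow>
        G Ls (map x [0..<n]) \<notin> set (map x [0..<n]) \<and>
        (\<forall>m. 1 \<le> m \<and> m < n \<longrightarrow> G Ls (map x [0..<n]) \<noteq> G Ls (map x [0..<m])))"

end

theory Submission
  imports Defs
begin

(* At step n the generator scans the indices i < n and accepts L_i whenever the noise rate of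
   L_i on the prefix is at most 2^-(i+2) and the intersection of all accepted languages stays
   infinite; it outputs a fresh element of that intersection. For the target K = L_k, the
   noise rate of K eventually drops below 2^-(k+2). If adding k to the indices accepted before
   k made the intersection I finite, then each of the n prefix elements lies either in I
   (at most |I| of them, by distinctness) or outside some accepted language (at most n/2 of
   them, since the thresholds sum to 1/2), so n <= 2|I|. Only finitely many such finite
   intersections exist, so for large n the index k is accepted and every output lies in K. *)

definition fresh_in :: "'a set \<Rightarrow> 'a set \<Rightarrow> 'a" where
  "fresh_in C E = (SOME w. w \<in> C - E)"

lemma fresh_in_Diff:
  assumes "infinite C" "finite E"
  shows "fresh_in C E \<in> C - E"
proof -
  have "infinite (C - E)"
    using assms by (rule Diff_infinite_finite[rotated])
  then have "C - E \<noteq> {}"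
    by (metis finite.emptyI)
  then show ?thesis
    unfolding fresh_in_def by (rule some_in_eq[THEN iffD2])
qed

definition threshold :: "nat \<Rightarrow> real" where
  "threshold i = (1/2) ^ (i + 2)"

lemma sum_threshold_le:
  assumes "finite B"
  shows "(\<Sum>j\<in>B. threshold j) \<le> 1/2"
proof -
  obtain m where "B \<subseteq> {..<m}"
    using assms finite_nat_set_iff_bounded by auto
  have partial_sum: "(\<Sum>j<l. threshold j) = 1/2 - (1/2) ^ (l + 1)" for l
    by (induction l) (auto simp: threshold_def)
  have "(\<Sum>j\<in>B. threshold j) \<le> (\<Sum>j<m. threshold j)"
    using \<open>B \<subseteq> {..<m}\<close> by (intro sum_mono2) (auto simp: threshold_def)
  also have "\<dots> \<le> 1/2"
    unfolding partial_sum by simp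
  finally show ?thesis .
qed

lemma noise_rate_cong:
  assumes "\<And>t. t < n \<Longrightarrow> x t = y t"
  shows "noise_rate L x n = noise_rate L y n"
proof -
  have "{t. t < n \<and> x t \<notin> L} = {t. t < n \<and> y t \<notin> L}"
    using assms by auto
  then show ?thesis
    unfolding noise_rate_def by simp
qed

lemma noise_rate_antimono:
  assumes "L \<subseteq> K"
  shows "noise_rate K x n \<le> noise_rate L x n"
proof -
  have "card {t. t < n \<and> x t \<notin> K} \<le> card {t. t < n \<and> x t \<notin> L}"
    using assms by (intro card_mono) auto
  then show ?thesis
    unfolding noise_rate_def by (simp add: divide_right_mono)
qed

lemma noise_count:
  "real n * noise_rate L x n = real (card {t. t < n \<and> x t \<notin> L})"
  by (cases "n = 0") (simp_all add: noise_rate_def)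

lemma length_le_card_Inter_plus_noise:
  fixes L :: "nat \<Rightarrow> nat set"
  assumes "inj x" "finite B" "finite (\<Inter>j\<in>B. L j)"
  shows "real n \<le> real (card (\<Inter>j\<in>B. L j)) + real n * (\<Sum>j\<in>B. noise_rate (L j) x n)"
proof -
  define I where "I = (\<Inter>j\<in>B. L j)"
  define inside where "inside = {t. t < n \<and> x t \<in> I}"
  define missed where "missed = (\<Union>j\<in>B. {t. t < n \<and> x t \<notin> L j})"
  have "inside \<union> missed = {..<n}"
    unfolding inside_def missed_def I_def by blast
  then have "n = card (inside \<union> missed)"
    by simp
  also have "\<dots> \<le> card inside + card missed"
    by (rule card_Un_le)
  finally have "real n \<le> real (card inside) + real (card missed)"
    by linarith
  moreover have "card inside \<le> card I"
    using assms(1,3) unfolding inside_def I_def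
    by (intro card_inj_on_le[of x]) (auto intro: inj_on_subset)
  moreover have "card missed \<le> (\<Sum>j\<in>B. card {t. t < n \<and> x t \<notin> L j})"
    unfolding missed_def using assms(2) by (rule card_UN_le)
  then have "real (card missed) \<le> real n * (\<Sum>j\<in>B. noise_rate (L j) x n)"
    by (simp add: sum_distrib_left noise_count flip: of_nat_sum)
  ultimately show ?thesis
    unfolding I_def by linarith
qed

lemma noisy_enum_omissions_inj: "noisy_enum_omissions K x \<Longrightarrow> inj x"
  unfolding noisy_enum_omissions_def noisy_enum_def by blast

lemma noisy_enum_omissions_noise_rate:
  assumes "noisy_enum_omissions K x"
  shows "noise_rate K x \<longlonglongrightarrow> 0"
proof -
  obtain Kh where "Kh \<subseteq> K" and "noisy_enum Kh x"
    using assms unfolding noisy_enum_omissions_def by blast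
  then have "noise_rate Kh x \<longlonglongrightarrow> 0"
    unfolding noisy_enum_def by blast
  moreover have "\<forall>\<^sub>F n in sequentially. 0 \<le> noise_rate K x n"
    by (simp add: noise_rate_def)
  moreover have "\<forall>\<^sub>F n in sequentially. noise_rate K x n \<le> noise_rate Kh x n"
    using \<open>Kh \<subseteq> K\<close> by (simp add: noise_rate_antimono)
  ultimately show ?thesis
    using tendsto_sandwich[of "\<lambda>_. 0" "noise_rate K x" sequentially "noise_rate Kh x" 0]
    by simp
qed

fun accepted :: "(nat \<Rightarrow> nat set) \<Rightarrow> nat list \<Rightarrow> nat \<Rightarrow> nat set" where
  "accepted Ls xs 0 = {}"
| "accepted Ls xs (Suc i) =
     (if noise_rate (Ls i) ((!) xs) (length xs) \<le> threshold i
         \<and> infinite (\<Inter>j\<in>insert i (accepted Ls xs i). Ls j)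
      then insert i (accepted Ls xs i) else accepted Ls xs i)"

definition candidates :: "(nat \<Rightarrow> nat set) \<Rightarrow> nat list \<Rightarrow> nat set" where
  "candidates Ls xs = (\<Inter>j\<in>accepted Ls xs (length xs). Ls j)"

text \<open>The generator only sees the current prefix, so it recomputes its earlier outputs
  from the shorter prefixes in order to avoid them.\<close>

fun outputs :: "(nat \<Rightarrow> nat set) \<Rightarrow> nat list \<Rightarrow> nat \<Rightarrow> nat list" where
  "outputs Ls xs 0 = []"
| "outputs Ls xs (Suc k) = outputs Ls xs k @
     [fresh_in (candidates Ls (take (Suc k) xs)) (set (take (Suc k) xs) \<union> set (outputs Ls xs k))]"

definition generator :: "(nat \<Rightarrow> nat set) \<Rightarrow> nat list \<Rightarrow> nat" where
  "generator Ls xs = last (outputs Ls xs (length xs))"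

lemma infinite_candidates: "infinite (candidates Ls xs)"
proof -
  have "infinite (\<Inter>j\<in>accepted Ls xs i. Ls j)" for i
    by (induction i) auto
  then show ?thesis
    unfolding candidates_def .
qed

lemma accepted_subset_lessThan: "accepted Ls xs i \<subseteq> {..<i}"
  by (induction i) auto

lemma accepted_noise_rate_le:
  "j \<in> accepted Ls xs i \<Longrightarrow> noise_rate (Ls j) ((!) xs) (length xs) \<le> threshold j"
  by (induction i) (auto split: if_splits)

lemma accepted_mono: "i \<le> i' \<Longrightarrow> accepted Ls xs i \<subseteq> accepted Ls xs i'"
  by (induction i' rule: dec_induct) auto

lemma outputs_take: "k \<le> m \<Longrightarrow> outputs Ls (take m xs) k = outputs Ls xs k"
  by (induction k) (auto simp: min_def)

lemma set_outputs_mono: "m \<le> k \<Longrightarrow> set (outputs Ls xs m) \<subseteq> set (outputs Ls xs k)"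
  by (induction k rule: dec_induct) auto

lemma generator_fresh:
  assumes "length xs = Suc k"
  shows "generator Ls xs \<in> candidates Ls xs - (set xs \<union> set (outputs Ls xs k))"
  using assms fresh_in_Diff[OF infinite_candidates, of "set xs \<union> set (outputs Ls xs k)" Ls xs]
  by (simp add: generator_def)

lemma generator_take_in_outputs:
  assumes "1 \<le> m" "m \<le> k" "m \<le> length xs"
  shows "generator Ls (take m xs) \<in> set (outputs Ls xs k)"
proof -
  have "generator Ls (take m xs) = last (outputs Ls xs m)"
    using assms(3) outputs_take[of m m] by (simp add: generator_def min_def)
  also have "\<dots> \<in> set (outputs Ls xs m)"
    using assms(1) by (cases m) simp_all
  finally show ?thesis
    using set_outputs_mono[OF assms(2)] by blast
qed

lemma element_generator_generator: "element_generator generator"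
  unfolding element_generator_def
proof (intro allI impI conjI)
  fix Ls :: "nat \<Rightarrow> nat set" and x :: "nat \<Rightarrow> nat" and n m :: nat
  assume "1 \<le> n"
  then obtain k where n: "n = Suc k"
    by (cases n) auto
  let ?xs = "map x [0..<n]"
  have fresh: "generator Ls ?xs \<notin> set ?xs \<union> set (outputs Ls ?xs k)"
    using generator_fresh[of ?xs k] n by simp
  then show "generator Ls ?xs \<notin> set ?xs"
    by blast
  assume "1 \<le> m \<and> m < n"
  then have "generator Ls (take m ?xs) \<in> set (outputs Ls ?xs k)"
    using n by (intro generator_take_in_outputs) auto
  moreover have "take m ?xs = map x [0..<m]"
    using \<open>1 \<le> m \<and> m < n\<close> by (simp add: take_map)
  ultimately show "generator Ls ?xs \<noteq> generator Ls (map x [0..<m])"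
    using fresh by auto
qed

lemma finite_Union_finite_Inters:
  fixes L :: "'i \<Rightarrow> 'a set"
  assumes "finite A"
  shows "finite (\<Union>{\<Inter>j\<in>B. L j | B. B \<subseteq> A \<and> finite (\<Inter>j\<in>B. L j)})"
proof (rule finite_Union)
  have "{\<Inter>j\<in>B. L j | B. B \<subseteq> A \<and> finite (\<Inter>j\<in>B. L j)} \<subseteq> (\<lambda>B. \<Inter>j\<in>B. L j) ` Pow A"
    by blast
  then show "finite {\<Inter>j\<in>B. L j | B. B \<subseteq> A \<and> finite (\<Inter>j\<in>B. L j)}"
    using assms by (meson finite_Pow_iff finite_imageI finite_subset)
qed blast

lemma accepted_if_low_noise:
  fixes Ls :: "nat \<Rightarrow> nat set" and k n :: nat
  defines "W \<equiv> \<Union>{\<Inter>j\<in>B. Ls j | B. B \<subseteq> {..k} \<and> finite (\<Inter>j\<in>B. Ls j)}"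
  assumes "inj x" "noise_rate (Ls k) x n \<le> threshold k" "k < n" "2 * card W < n"
  shows "k \<in> accepted Ls (map x [0..<n]) n"
proof -
  let ?xs = "map x [0..<n]"
  define B where "B = insert k (accepted Ls ?xs k)"
  have B_bounded: "B \<subseteq> {..k}"
    unfolding B_def using accepted_subset_lessThan[of Ls ?xs k] by auto
  have prefix_rate: "noise_rate L ((!) ?xs) n = noise_rate L x n" for L
    using noise_rate_cong[of n "(!) ?xs" x L] by simp
  have low_noise: "noise_rate (Ls j) x n \<le> threshold j" if "j \<in> B" for j
    using that assms(3) accepted_noise_rate_le[of j Ls ?xs k]
    by (auto simp: B_def prefix_rate)
  have "infinite (\<Inter>j\<in>B. Ls j)"
  proof
    assume finite_Inter: "finite (\<Inter>j\<in>B. Ls j)"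
    have "finite B"
      using B_bounded finite_subset by blast
    have "real n * (\<Sum>j\<in>B. noise_rate (Ls j) x n) \<le> real n * (\<Sum>j\<in>B. threshold j)"
      using low_noise by (intro mult_left_mono sum_mono) auto
    also have "\<dots> \<le> real n / 2"
      using mult_left_mono[OF sum_threshold_le[OF \<open>finite B\<close>], of "real n"] by simp
    finally have "real n \<le> 2 * real (card (\<Inter>j\<in>B. Ls j))"
      using length_le_card_Inter_plus_noise[OF assms(2) \<open>finite B\<close> finite_Inter, of n] by linarith
    moreover have "card (\<Inter>j\<in>B. Ls j) \<le> card W"
      using B_bounded finite_Inter finite_Union_finite_Inters[of "{..k}" Ls]
      unfolding W_def by (intro card_mono) blast+
    ultimately show False
      using assms(5) by linarith
  qed
  then have "k \<in> accepted Ls ?xs (Suc k)"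
    using assms(3) by (simp add: B_def prefix_rate)
  then show ?thesis
    using accepted_mono[of "Suc k" n Ls ?xs] assms(4) by auto
qed

lemma eventually_generator_in_target:
  fixes Ls :: "nat \<Rightarrow> nat set"
  assumes "noisy_enum_omissions (Ls k) x"
  shows "eventually (\<lambda>n. generator Ls (map x [0..<n]) \<in> Ls k) sequentially"
proof -
  define W where "W = \<Union>{\<Inter>j\<in>B. Ls j | B. B \<subseteq> {..k} \<and> finite (\<Inter>j\<in>B. Ls j)}"
  have "eventually (\<lambda>n. noise_rate (Ls k) x n < threshold k) sequentially"
    using noisy_enum_omissions_noise_rate[OF assms]
    by (rule order_tendstoD) (simp add: threshold_def)
  moreover have "eventually (\<lambda>n. max k (2 * card W) < n) sequentially"
    by (rule eventually_gt_at_top)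
  ultimately show ?thesis
  proof eventually_elim
    case (elim n)
    let ?xs = "map x [0..<n]"
    have "k \<in> accepted Ls ?xs (length ?xs)"
      using accepted_if_low_noise[OF noisy_enum_omissions_inj[OF assms], of Ls k n] elim
      unfolding W_def by simp
    then have "candidates Ls ?xs \<subseteq> Ls k"
      unfolding candidates_def by blast
    moreover obtain m where "length ?xs = Suc m"
      using elim by (cases n) auto
    ultimately show ?case
      using generator_fresh[of ?xs m Ls] by blast
  qed
qed

theorem theorem5p1:
  shows "\<exists>G. element_generator G \<and>
    (\<forall>Ls :: nat \<Rightarrow> nat set. (\<forall>i. infinite (Ls i)) \<longrightarrow>
      (\<forall>K \<in> range Ls. \<forall>x. noisy_enum_omissions K x \<longrightarrow>
         (\<exists>n0. \<forall>n \<ge> n0. G Ls (map x [0..<n]) \<in> K)))"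
proof (intro exI[of _ generator] conjI element_generator_generator allI impI ballI)
  fix Ls :: "nat \<Rightarrow> nat set" and K x
  assume "K \<in> range Ls" and "noisy_enum_omissions K x"
  then obtain k where "K = Ls k" and "noisy_enum_omissions (Ls k) x"
    by blast
  then show "\<exists>n0. \<forall>n \<ge> n0. generator Ls (map x [0..<n]) \<in> K"
    using eventually_generator_in_target unfolding eventually_sequentially by blast
qed

end
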